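(* Let $S$ be an $E$-unitary inverse semigroup, $A$ a semilattice of groups, $\Lambda=(\alpha,\lambda,f)$ a Sieben twisted $S$-module structure on $A$, $\Theta=\Theta^\Lambda=(\theta,w)$ the corresponding twisted partial action of $\mathcal G(S)$ on $A$, and $\Lambda'=\Lambda^\Theta=(\alpha',\lambda',f')$ the corresponding twisted $E(A)*_\theta\mathcal G(S)$-module structure on $A$. Then there exists an isomorphism $\nu:S\to E(A)*_\theta\mathcal G(S)$ such that $\alpha=\alpha'\circ\nu|_{E(S)}$, $\lambda=\lambda'\circ\nu$ and $f=f'\circ(\nu\times\nu)$.
   Context: A semilattice of groups is an inverse semigroup $A$ with central idempotents; $A_e=\{a: aa^{-1}=a^{-1}a=e\}$. $\sigma$ is the minimum group congruence, $\mathcal G(S)=S/\sigma$; $E$-unitary: $e\le s$, $e\in E(S)$ imply $s\in E(S)$. A twisted $S$-module structure $(\alpha,\lambda,f)$: $\alpha:E(S)\to E(A)$ isomorphism, $\lambda_s$ relatively invertible endomorphisms of $A$ (there exist $\bar\varphi\in\mathrm{End}\,A$, $e_\varphi\in E(A)$ with $\bar\varphi\varphi(a)=e_\varphi a$, $\varphi\bar\varphi(a)=\varphi(e_\varphi)a$, $e_\varphi$ identity of $\bar\varphi(A)$, $\varphi(e_\varphi)$ identity of $\varphi(A)$), $f(s,t)\in A_{\alpha(stt^{-1}s^{-1})}$, with (i) $\lambda_e(a)=\alpha(e)a$; (ii) $\lambda_s(\alpha(e))=\alpha(ses^{-1})$; (iii) $\lambda_s\lambda_t(a)=f(s,t)\lambda_{st}(a)f(s,t)^{-1}$;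 (iv) $f(se,e)=\alpha(ses^{-1})$, $f(e,es)=\alpha(ess^{-1})$; (v) $\lambda_s(f(t,u))f(s,tu)=f(s,t)f(st,u)$; Sieben: also $f(s,e)=\alpha(ses^{-1})$, $f(e,s)=\alpha(ess^{-1})$. $\Theta^\Lambda=(\theta,w)$ (a twisted partial action of $\mathcal G(S)$ on $A$, in the sense of a family of isomorphisms $\theta_x:D_{x^{-1}}\to D_x$ of ideals and invertible multipliers $w_{x,y}$ of $D_xD_{xy}$): $D_x=\bigsqcup_{s\in x}A_{\alpha(ss^{-1})}$; $\theta_x(a)=\lambda_s(a)$ for $a\in D_{x^{-1}}$, $s\in x$ unique with $\alpha(s^{-1}s)=aa^{-1}$; $w_{x,y}a=f(s,s^{-1}t)a$, $aw_{x,y}=af(s,s^{-1}t)$ for $a\in D_xD_{xy}$, $s\in x$, $t\in xy$ unique with $\alpha(ss^{-1})=\alpha(tt^{-1})=aa^{-1}$. The $\theta_x$ restrict to a partial action $\theta$ on $E(A)$, and $E(A)*_\theta\mathcal G(S)=\{e\delta_x: e\in E(D_x)\}$ with $e\delta_x\cdot e'\delta_y=\theta_x(\theta_x^{-1}(e)e')\delta_{xy}$. $\Lambda^\Theta=(\alpha',\lambda',f')$: $\alpha'(e\delta_1)=e$, $\lambda'_{e\delta_x}(a)=\theta_x(\theta_x^{-1}(e)a)$, $f'(e\delta_x,e'\delta_y)=\theta_x(\theta_x^{-1}(e)e')w_{x,y}$ (element of $D_xD_{xy}$ times multiplier). *)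

theory Defs
  imports Main
begin

definition inverse_semigroup :: "'s set \<Rightarrow> ('s \<Rightarrow> 's \<Rightarrow> 's) \<Rightarrow> bool" where
  "inverse_semigroup S m \<longleftrightarrow>
     (\<forall>x\<in>S. \<forall>y\<in>S. m x y \<in> S) \<and>
     (\<forall>x\<in>S. \<forall>y\<in>S. \<forall>z\<in>S. m (m x y) z = m x (m y z)) \<and>
     (\<forall>x\<in>S. \<exists>!y. y \<in> S \<and> m (m x y) x = x \<and> m (m y x) y = y)"

definition sinv :: "'s set \<Rightarrow> ('s \<Rightarrow> 's \<Rightarrow> 's) \<Rightarrow> 's \<Rightarrow> 's" where
  "sinv S m x = (THE y. y \<in> S \<and> m (m x y) x = x \<and> m (m y x) y = y)"

definition idems :: "'s set \<Rightarrow> ('s \<Rightarrow> 's \<Rightarrow> 's) \<Rightarrow> 's set" where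
  "idems S m = {e \<in> S. m e e = e}"

definition nat_le :: "'s set \<Rightarrow> ('s \<Rightarrow> 's \<Rightarrow> 's) \<Rightarrow> 's \<Rightarrow> 's \<Rightarrow> bool" where
  "nat_le S m s t \<longleftrightarrow> s \<in> S \<and> t \<in> S \<and> (\<exists>e\<in>idems S m. s = m e t)"

definition E_unitary :: "'s set \<Rightarrow> ('s \<Rightarrow> 's \<Rightarrow> 's) \<Rightarrow> bool" where
  "E_unitary S m \<longleftrightarrow> (\<forall>e\<in>idems S m. \<forall>s\<in>S. nat_le S m e s \<longrightarrow> s \<in> idems S m)"

definition sigma :: "'s set \<Rightarrow> ('s \<Rightarrow> 's \<Rightarrow> 's) \<Rightarrow> ('s \<times> 's) set" where
  "sigma S m = {(s, t). s \<in> S \<and> t \<in> S \<and> (\<exists>e\<in>idems S m. m e s = m e t)}"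

definition GS :: "'s set \<Rightarrow> ('s \<Rightarrow> 's \<Rightarrow> 's) \<Rightarrow> 's set set" where
  "GS S m = S // sigma S m"

definition gmul :: "'s set \<Rightarrow> ('s \<Rightarrow> 's \<Rightarrow> 's) \<Rightarrow> 's set \<Rightarrow> 's set \<Rightarrow> 's set" where
  "gmul S m x y = sigma S m `` {m (SOME s. s \<in> x) (SOME t. t \<in> y)}"

definition ginv :: "'s set \<Rightarrow> ('s \<Rightarrow> 's \<Rightarrow> 's) \<Rightarrow> 's set \<Rightarrow> 's set" where
  "ginv S m x = sigma S m `` {sinv S m (SOME s. s \<in> x)}"

definition semilattice_of_groups :: "'a set \<Rightarrow> ('a \<Rightarrow> 'a \<Rightarrow> 'a) \<Rightarrow> bool" where
  "semilattice_of_groups A m \<longleftrightarrow> inverse_semigroup A m \<and>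
     (\<forall>e\<in>idems A m. \<forall>a\<in>A. m e a = m a e)"

definition Agrp :: "'a set \<Rightarrow> ('a \<Rightarrow> 'a \<Rightarrow> 'a) \<Rightarrow> 'a \<Rightarrow> 'a set" where
  "Agrp A m e = {a \<in> A. m a (sinv A m a) = e \<and> m (sinv A m a) a = e}"

definition endo :: "'a set \<Rightarrow> ('a \<Rightarrow> 'a \<Rightarrow> 'a) \<Rightarrow> ('a \<Rightarrow> 'a) \<Rightarrow> bool" where
  "endo A m \<phi> \<longleftrightarrow> (\<forall>a\<in>A. \<phi> a \<in> A) \<and> (\<forall>a\<in>A. \<forall>b\<in>A. \<phi> (m a b) = m (\<phi> a) (\<phi> b))"

definition is_identity_of :: "('a \<Rightarrow> 'a \<Rightarrow> 'a) \<Rightarrow> 'a \<Rightarrow> 'a set \<Rightarrow> bool" where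
  "is_identity_of m e B \<longleftrightarrow> e \<in> B \<and> (\<forall>b\<in>B. m e b = b \<and> m b e = b)"

definition rel_invertible :: "'a set \<Rightarrow> ('a \<Rightarrow> 'a \<Rightarrow> 'a) \<Rightarrow> ('a \<Rightarrow> 'a) \<Rightarrow> bool" where
  "rel_invertible A m \<phi> \<longleftrightarrow> (\<exists>\<psi> e. endo A m \<psi> \<and> e \<in> idems A m \<and>
     (\<forall>a\<in>A. \<psi> (\<phi> a) = m e a) \<and> (\<forall>a\<in>A. \<phi> (\<psi> a) = m (\<phi> e) a) \<and>
     is_identity_of m e (\<psi> ` A) \<and> is_identity_of m (\<phi> e) (\<phi> ` A))"

definition twisted_module ::
  "'s set \<Rightarrow> ('s \<Rightarrow> 's \<Rightarrow> 's) \<Rightarrow> 'a set \<Rightarrow> ('a \<Rightarrow> 'a \<Rightarrow> 'a) \<Rightarrow>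
   ('s \<Rightarrow> 'a) \<Rightarrow> ('s \<Rightarrow> 'a \<Rightarrow> 'a) \<Rightarrow> ('s \<Rightarrow> 's \<Rightarrow> 'a) \<Rightarrow> bool" where
  "twisted_module S mS A mA \<alpha> lam f \<longleftrightarrow>
     bij_betw \<alpha> (idems S mS) (idems A mA) \<and>
     (\<forall>e\<in>idems S mS. \<forall>e'\<in>idems S mS. \<alpha> (mS e e') = mA (\<alpha> e) (\<alpha> e')) \<and>
     (\<forall>s\<in>S. endo A mA (lam s) \<and> rel_invertible A mA (lam s)) \<and>
     (\<forall>s\<in>S. \<forall>t\<in>S. f s t \<in> Agrp A mA (\<alpha> (mS (mS (mS s t) (sinv S mS t)) (sinv S mS s)))) \<and>
     (\<forall>e\<in>idems S mS. \<forall>a\<in>A. lam e a = mA (\<alpha> e) a) \<and>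
     (\<forall>s\<in>S. \<forall>e\<in>idems S mS. lam s (\<alpha> e) = \<alpha> (mS (mS s e) (sinv S mS s))) \<and>
     (\<forall>s\<in>S. \<forall>t\<in>S. \<forall>a\<in>A.
        lam s (lam t a) = mA (mA (f s t) (lam (mS s t) a)) (sinv A mA (f s t))) \<and>
     (\<forall>s\<in>S. \<forall>e\<in>idems S mS.
        f (mS s e) e = \<alpha> (mS (mS s e) (sinv S mS s)) \<and>
        f e (mS e s) = \<alpha> (mS (mS e s) (sinv S mS s))) \<and>
     (\<forall>s\<in>S. \<forall>t\<in>S. \<forall>u\<in>S.
        mA (lam s (f t u)) (f s (mS t u)) = mA (f s t) (f (mS s t) u))"

definition sieben_twisted_module ::
  "'s set \<Rightarrow> ('s \<Rightarrow> 's \<Rightarrow> 's) \<Rightarrow> 'a set \<Rightarrow> ('a \<Rightarrow> 'a \<Rightarrow> 'a) \<Rightarrow>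
   ('s \<Rightarrow> 'a) \<Rightarrow> ('s \<Rightarrow> 'a \<Rightarrow> 'a) \<Rightarrow> ('s \<Rightarrow> 's \<Rightarrow> 'a) \<Rightarrow> bool" where
  "sieben_twisted_module S mS A mA \<alpha> lam f \<longleftrightarrow> twisted_module S mS A mA \<alpha> lam f \<and>
     (\<forall>s\<in>S. \<forall>e\<in>idems S mS.
        f s e = \<alpha> (mS (mS s e) (sinv S mS s)) \<and>
        f e s = \<alpha> (mS (mS e s) (sinv S mS s)))"

definition Dx :: "'s set \<Rightarrow> ('s \<Rightarrow> 's \<Rightarrow> 's) \<Rightarrow> 'a set \<Rightarrow> ('a \<Rightarrow> 'a \<Rightarrow> 'a) \<Rightarrow>
    ('s \<Rightarrow> 'a) \<Rightarrow> 's set \<Rightarrow> 'a set" where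
  "Dx S mS A mA \<alpha> x = (\<Union>s\<in>x. Agrp A mA (\<alpha> (mS s (sinv S mS s))))"

text \<open>\<open>\<theta>\<^sub>x(a) = \<lambda>\<^sub>s(a)\<close>, \<open>s \<in> x\<close> unique with \<open>\<alpha>(s\<^sup>-\<^sup>1s) = a a\<^sup>-\<^sup>1\<close> (for \<open>a \<in> D\<^sub>x\<^sub>\<^sup>-\<^sup>1\<close>).\<close>
definition theta :: "'s set \<Rightarrow> ('s \<Rightarrow> 's \<Rightarrow> 's) \<Rightarrow> 'a set \<Rightarrow> ('a \<Rightarrow> 'a \<Rightarrow> 'a) \<Rightarrow>
    ('s \<Rightarrow> 'a) \<Rightarrow> ('s \<Rightarrow> 'a \<Rightarrow> 'a) \<Rightarrow> 's set \<Rightarrow> 'a \<Rightarrow> 'a" where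
  "theta S mS A mA \<alpha> lam x a =
     lam (THE s. s \<in> x \<and> \<alpha> (mS (sinv S mS s) s) = mA a (sinv A mA a)) a"

definition theta_inv :: "'s set \<Rightarrow> ('s \<Rightarrow> 's \<Rightarrow> 's) \<Rightarrow> 'a set \<Rightarrow> ('a \<Rightarrow> 'a \<Rightarrow> 'a) \<Rightarrow>
    ('s \<Rightarrow> 'a) \<Rightarrow> ('s \<Rightarrow> 'a \<Rightarrow> 'a) \<Rightarrow> 's set \<Rightarrow> 'a \<Rightarrow> 'a" where
  "theta_inv S mS A mA \<alpha> lam x =
     inv_into (Dx S mS A mA \<alpha> (ginv S mS x)) (theta S mS A mA \<alpha> lam x)"

text \<open>Right action of the multiplier \<open>w\<^sub>x\<^sub>,\<^sub>y\<close> on \<open>a \<in> D\<^sub>x D\<^sub>x\<^sub>y\<close>: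
  \<open>a w\<^sub>x\<^sub>,\<^sub>y = a f(s, s\<^sup>-\<^sup>1t)\<close>, \<open>s \<in> x\<close>, \<open>t \<in> xy\<close> unique with \<open>\<alpha>(ss\<^sup>-\<^sup>1) = \<alpha>(tt\<^sup>-\<^sup>1) = aa\<^sup>-\<^sup>1\<close>.\<close>
definition w_right :: "'s set \<Rightarrow> ('s \<Rightarrow> 's \<Rightarrow> 's) \<Rightarrow> 'a set \<Rightarrow> ('a \<Rightarrow> 'a \<Rightarrow> 'a) \<Rightarrow>
    ('s \<Rightarrow> 'a) \<Rightarrow> ('s \<Rightarrow> 's \<Rightarrow> 'a) \<Rightarrow> 's set \<Rightarrow> 's set \<Rightarrow> 'a \<Rightarrow> 'a" where
  "w_right S mS A mA \<alpha> f x y a =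
     (let s = (THE s. s \<in> x \<and> \<alpha> (mS s (sinv S mS s)) = mA a (sinv A mA a));
          t = (THE t. t \<in> gmul S mS x y \<and> \<alpha> (mS t (sinv S mS t)) = mA a (sinv A mA a))
      in mA a (f s (mS (sinv S mS s) t)))"

text \<open>Elements \<open>e\<delta>\<^sub>x\<close> are represented as pairs \<open>(e, x)\<close>.\<close>
definition cp_carrier :: "'s set \<Rightarrow> ('s \<Rightarrow> 's \<Rightarrow> 's) \<Rightarrow> 'a set \<Rightarrow> ('a \<Rightarrow> 'a \<Rightarrow> 'a) \<Rightarrow>
    ('s \<Rightarrow> 'a) \<Rightarrow> ('a \<times> 's set) set" where
  "cp_carrier S mS A mA \<alpha> =
     {(e, x). x \<in> GS S mS \<and> e \<in> idems A mA \<and> e \<in> Dx S mS A mA \<alpha> x}"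

definition cp_mul :: "'s set \<Rightarrow> ('s \<Rightarrow> 's \<Rightarrow> 's) \<Rightarrow> 'a set \<Rightarrow> ('a \<Rightarrow> 'a \<Rightarrow> 'a) \<Rightarrow>
    ('s \<Rightarrow> 'a) \<Rightarrow> ('s \<Rightarrow> 'a \<Rightarrow> 'a) \<Rightarrow> 'a \<times> 's set \<Rightarrow> 'a \<times> 's set \<Rightarrow> 'a \<times> 's set" where
  "cp_mul S mS A mA \<alpha> lam p q =
     (theta S mS A mA \<alpha> lam (snd p) (mA (theta_inv S mS A mA \<alpha> lam (snd p) (fst p)) (fst q)),
      gmul S mS (snd p) (snd q))"

text \<open>\<open>\<alpha>'(e\<delta>\<^sub>1) = e\<close> (only used on idempotents \<open>e\<delta>\<^sub>1\<close>).\<close>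
definition alpha' :: "'a \<times> 's set \<Rightarrow> 'a" where
  "alpha' p = fst p"

definition lambda' :: "'s set \<Rightarrow> ('s \<Rightarrow> 's \<Rightarrow> 's) \<Rightarrow> 'a set \<Rightarrow> ('a \<Rightarrow> 'a \<Rightarrow> 'a) \<Rightarrow>
    ('s \<Rightarrow> 'a) \<Rightarrow> ('s \<Rightarrow> 'a \<Rightarrow> 'a) \<Rightarrow> 'a \<times> 's set \<Rightarrow> 'a \<Rightarrow> 'a" where
  "lambda' S mS A mA \<alpha> lam p a =
     theta S mS A mA \<alpha> lam (snd p) (mA (theta_inv S mS A mA \<alpha> lam (snd p) (fst p)) a)"

definition f' :: "'s set \<Rightarrow> ('s \<Rightarrow> 's \<Rightarrow> 's) \<Rightarrow> 'a set \<Rightarrow> ('a \<Rightarrow> 'a \<Rightarrow> 'a) \<Rightarrow>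
    ('s \<Rightarrow> 'a) \<Rightarrow> ('s \<Rightarrow> 'a \<Rightarrow> 'a) \<Rightarrow> ('s \<Rightarrow> 's \<Rightarrow> 'a) \<Rightarrow>
    'a \<times> 's set \<Rightarrow> 'a \<times> 's set \<Rightarrow> 'a" where
  "f' S mS A mA \<alpha> lam f p q =
     w_right S mS A mA \<alpha> f (snd p) (snd q)
       (theta S mS A mA \<alpha> lam (snd p) (mA (theta_inv S mS A mA \<alpha> lam (snd p) (fst p)) (fst q)))"

end

theory Submission
  imports Defs
begin

text \<open>The isomorphism is \<open>\<nu>(s) = \<alpha>(ss\<^sup>-\<^sup>1)\<delta>\<^bsub>\<sigma>(s)\<^esub>\<close>. It is a bijection onto
  \<open>E(A) *\<^sub>\<theta> \<G>(S)\<close> because in an \<open>E\<close>-unitary inverse semigroup an element is determined by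
  its \<open>\<sigma>\<close>-class together with its range idempotent; the same fact makes the elements chosen
  by \<open>THE\<close> in \<open>\<theta>\<close> and \<open>w\<close> explicit. The central computation is
  \<open>\<theta>\<^bsub>\<sigma>(s)\<^esub>(\<alpha>(s\<^sup>-\<^sup>1s)a) = \<lambda>\<^sub>s(a)\<close> for all \<open>a\<close>: the element of \<open>\<sigma>(s)\<close> selected by \<open>\<theta>\<close> is \<open>sh\<close> for an
  idempotent \<open>h \<le> s\<^sup>-\<^sup>1s\<close>, and Sieben's normalisation \<open>f(s,h) = \<alpha>(shs\<^sup>-\<^sup>1)\<close> makes
  \<open>\<lambda>\<^sub>s\<close> and \<open>\<lambda>\<^bsub>sh\<^esub>\<close> agree there. This gives \<open>\<lambda> = \<lambda>' \<circ> \<nu>\<close> and, applied to \<open>a = \<alpha>(tt\<^sup>-\<^sup>1)\<close>,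
  multiplicativity of \<open>\<nu>\<close>. Finally \<open>w\<close> evaluates \<open>f\<close> at \<open>(stt\<^sup>-\<^sup>1, (stt\<^sup>-\<^sup>1)\<^sup>-\<^sup>1st)\<close>, which the
  cocycle identity together with the normalisation reduces to \<open>f(s,t)\<close>.\<close>

locale inv_semigroup =
  fixes S :: "'s set" and m :: "'s \<Rightarrow> 's \<Rightarrow> 's" (infixl "\<cdot>" 70)
  assumes is_inverse_semigroup: "inverse_semigroup S m"
begin

abbreviation iv where "iv x \<equiv> sinv S m x"
abbreviation E where "E \<equiv> idems S m"

lemma mult_closed[simp]: "x\<in>S \<Longrightarrow> y\<in>S \<Longrightarrow> x\<cdot>y \<in> S"
  using is_inverse_semigroup unfolding inverse_semigroup_def by blast

lemma mult_assoc: "x\<in>S \<Longrightarrow> y\<in>S \<Longrightarrow> z\<in>S \<Longrightarrow> x\<cdot>y\<cdot>z = x\<cdot>(y\<cdot>z)"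
  using is_inverse_semigroup unfolding inverse_semigroup_def by blast

lemma sinv_props: assumes "x\<in>S" shows "iv x \<in> S \<and> x \<cdot> iv x \<cdot> x = x \<and> iv x \<cdot> x \<cdot> iv x = iv x"
proof -
  have "\<exists>!y. y \<in> S \<and> x\<cdot>y\<cdot>x = x \<and> y\<cdot>x\<cdot>y = y" using is_inverse_semigroup assms unfolding inverse_semigroup_def by blast
  from theI'[OF this] show ?thesis unfolding sinv_def .
qed

lemma inv_closed[simp]: "x\<in>S \<Longrightarrow> iv x \<in> S" using sinv_props by blast
lemma mult_inv_mult: "x\<in>S \<Longrightarrow> x \<cdot> iv x \<cdot> x = x" using sinv_props by blast
lemma inv_mult_inv: "x\<in>S \<Longrightarrow> iv x \<cdot> x \<cdot> iv x = iv x" using sinv_props by blast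

lemma inv_unique: assumes "x\<in>S" "y\<in>S" "x\<cdot>y\<cdot>x = x" "y\<cdot>x\<cdot>y = y" shows "y = iv x"
proof -
  have "\<exists>!y. y \<in> S \<and> x\<cdot>y\<cdot>x = x \<and> y\<cdot>x\<cdot>y = y" using is_inverse_semigroup assms unfolding inverse_semigroup_def by blast
  from the1_equality[OF this] assms show ?thesis unfolding sinv_def by blast
qed

lemma inv_inv[simp]: "x\<in>S \<Longrightarrow> iv (iv x) = x"
  using inv_unique[of "iv x" x] mult_inv_mult inv_mult_inv by simp

lemma idems_iff: "e \<in> E \<longleftrightarrow> e \<in> S \<and> e\<cdot>e = e" unfolding idems_def by simp
lemma idem_in[simp]: "e \<in> E \<Longrightarrow> e \<in> S" unfolding idems_def by simp
lemma idem_idem[simp]: "e \<in> E \<Longrightarrow> e\<cdot>e = e" unfolding idems_def by simp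
lemma idem_left_absorb: "e \<in> E \<Longrightarrow> z\<in>S \<Longrightarrow> e\<cdot>(e\<cdot>z) = e\<cdot>z" by (simp add: mult_assoc[symmetric])

lemma inv_idem[simp]: "e \<in> E \<Longrightarrow> iv e = e"
  using inv_unique[of e e] by simp

text \<open>Uniqueness of inverses forces \<open>(ef)\<^sup>-\<^sup>1 = f(ef)\<^sup>-\<^sup>1e\<close>, which is idempotent.\<close>
lemma idems_mult_closed:
  assumes e: "e\<in>E" and f: "f\<in>E" shows "e\<cdot>f \<in> E"
proof -
  have eS: "e\<in>S" and fS: "f\<in>S" using e f by auto
  define x where "x = iv (e\<cdot>f)"
  have xS: "x\<in>S" unfolding x_def using eS fS by simp
  have a1: "e\<cdot>f\<cdot>x\<cdot>(e\<cdot>f) = e\<cdot>f" unfolding x_def using mult_inv_mult[of "e\<cdot>f"] eS fS by simp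
  have a2: "x\<cdot>(e\<cdot>f)\<cdot>x = x" unfolding x_def using inv_mult_inv[of "e\<cdot>f"] eS fS by simp
  have b1: "e\<cdot>f\<cdot>(f\<cdot>x\<cdot>e)\<cdot>(e\<cdot>f) = e\<cdot>f"
  proof -
    have "e\<cdot>f\<cdot>(f\<cdot>x\<cdot>e)\<cdot>(e\<cdot>f) = e\<cdot>(f\<cdot>f)\<cdot>x\<cdot>(e\<cdot>e)\<cdot>f" using eS fS xS by (simp add: mult_assoc)
    also have "\<dots> = e\<cdot>f\<cdot>x\<cdot>(e\<cdot>f)" using e f eS fS xS by (simp add: mult_assoc)
    finally show ?thesis using a1 by simp
  qed
  have b2: "f\<cdot>x\<cdot>e\<cdot>(e\<cdot>f)\<cdot>(f\<cdot>x\<cdot>e) = f\<cdot>x\<cdot>e"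
  proof -
    have "f\<cdot>x\<cdot>e\<cdot>(e\<cdot>f)\<cdot>(f\<cdot>x\<cdot>e) = f\<cdot>(x\<cdot>(e\<cdot>e)\<cdot>(f\<cdot>f)\<cdot>x)\<cdot>e" using eS fS xS by (simp add: mult_assoc)
    also have "\<dots> = f\<cdot>(x\<cdot>(e\<cdot>f)\<cdot>x)\<cdot>e" using e f eS fS xS by (simp add: mult_assoc)
    finally show ?thesis using a2 by simp
  qed
  have fxe: "f\<cdot>x\<cdot>e = x" unfolding x_def by (rule inv_unique) (use b1 b2 eS fS xS x_def in auto)
  have xx: "x\<cdot>x = x"
  proof -
    have "x\<cdot>x = f\<cdot>x\<cdot>e\<cdot>(f\<cdot>x\<cdot>e)" using fxe by simp
    also have "\<dots> = f\<cdot>(x\<cdot>(e\<cdot>f)\<cdot>x)\<cdot>e" using eS fS xS by (simp add: mult_assoc)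
    also have "\<dots> = x" using a2 fxe by simp
    finally show ?thesis .
  qed
  have xE: "x\<in>E" using xS xx idems_iff by blast
  have "e\<cdot>f = iv x" apply (rule inv_unique) using xS eS fS a1 a2 by (auto simp: mult_assoc)
  also have "\<dots> = x" using xE by simp
  finally show ?thesis using xE by simp
qed

lemma idems_commute: assumes e: "e\<in>E" and f: "f\<in>E" shows "e\<cdot>f = f\<cdot>e"
proof -
  have eS: "e\<in>S" and fS: "f\<in>S" using e f by auto
  have ef: "e\<cdot>f\<in>E" and fe: "f\<cdot>e\<in>E" using idems_mult_closed e f by auto
  have "f\<cdot>e = iv (e\<cdot>f)"
  proof (rule inv_unique)
    have "e\<cdot>f\<cdot>(f\<cdot>e)\<cdot>(e\<cdot>f) = (e\<cdot>f)\<cdot>(e\<cdot>f)" using e f eS fS by (simp add: mult_assoc idem_left_absorb)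
    then show "e\<cdot>f\<cdot>(f\<cdot>e)\<cdot>(e\<cdot>f) = e\<cdot>f" using ef by simp
    have "f\<cdot>e\<cdot>(e\<cdot>f)\<cdot>(f\<cdot>e) = (f\<cdot>e)\<cdot>(f\<cdot>e)" using e f eS fS by (simp add: mult_assoc idem_left_absorb)
    then show "f\<cdot>e\<cdot>(e\<cdot>f)\<cdot>(f\<cdot>e) = f\<cdot>e" using fe by simp
  qed (use eS fS in auto)
  then show ?thesis using ef by simp
qed

lemma idems_left_commute: "e\<in>E \<Longrightarrow> f\<in>E \<Longrightarrow> z\<in>S \<Longrightarrow> e\<cdot>(f\<cdot>z) = f\<cdot>(e\<cdot>z)"
  by (simp add: mult_assoc[symmetric] idems_commute)

lemma mult_inv_mult': "x\<in>S \<Longrightarrow> x\<cdot>(iv x\<cdot>x) = x" using mult_inv_mult[of x] mult_assoc[of x "iv x" x] by simp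
lemma inv_mult_inv': "x\<in>S \<Longrightarrow> iv x\<cdot>(x\<cdot>iv x) = iv x" using inv_mult_inv[of x] mult_assoc[of "iv x" x "iv x"] by simp
lemma mult_inv_mult_left: "x\<in>S \<Longrightarrow> z\<in>S \<Longrightarrow> x\<cdot>(iv x\<cdot>(x\<cdot>z)) = x\<cdot>z" by (simp add: mult_assoc[symmetric] mult_inv_mult)
lemma inv_mult_inv_left: "x\<in>S \<Longrightarrow> z\<in>S \<Longrightarrow> iv x\<cdot>(x\<cdot>(iv x\<cdot>z)) = iv x\<cdot>z" by (simp add: mult_assoc[symmetric] inv_mult_inv)

lemma mult_inv_idem[simp]: "x\<in>S \<Longrightarrow> x\<cdot>iv x \<in> E"
  unfolding idems_iff by (simp add: mult_assoc mult_inv_mult_left)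

lemma inv_mult_idem[simp]: "x\<in>S \<Longrightarrow> iv x\<cdot>x \<in> E"
  unfolding idems_iff by (simp add: mult_assoc inv_mult_inv_left)

lemma inv_mult: assumes x: "x\<in>S" and y: "y\<in>S" shows "iv (x\<cdot>y) = iv y \<cdot> iv x"
proof -
  have "iv y \<cdot> iv x = iv (x\<cdot>y)"
  proof (rule inv_unique)
    have "x\<cdot>y\<cdot>(iv y\<cdot>iv x)\<cdot>(x\<cdot>y) = x\<cdot>((y\<cdot>iv y)\<cdot>((iv x\<cdot>x)\<cdot>y))" using x y by (simp add: mult_assoc)
    also have "\<dots> = x\<cdot>((iv x\<cdot>x)\<cdot>((y\<cdot>iv y)\<cdot>y))" using x y by (simp add: idems_left_commute)
    also have "\<dots> = x\<cdot>y" using x y by (simp add: mult_assoc mult_inv_mult_left mult_inv_mult')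
    finally show "x\<cdot>y\<cdot>(iv y\<cdot>iv x)\<cdot>(x\<cdot>y) = x\<cdot>y" .
    have "iv y\<cdot>iv x\<cdot>(x\<cdot>y)\<cdot>(iv y\<cdot>iv x) = iv y\<cdot>((iv x\<cdot>x)\<cdot>((y\<cdot>iv y)\<cdot>iv x))" using x y by (simp add: mult_assoc)
    also have "\<dots> = iv y\<cdot>((y\<cdot>iv y)\<cdot>((iv x\<cdot>x)\<cdot>iv x))" using x y by (simp add: idems_left_commute)
    also have "\<dots> = iv y\<cdot>iv x" using x y by (simp add: mult_assoc inv_mult_inv_left inv_mult_inv')
    finally show "iv y\<cdot>iv x\<cdot>(x\<cdot>y)\<cdot>(iv y\<cdot>iv x) = iv y\<cdot>iv x" .
  qed (use x y in auto)
  then show ?thesis by simp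
qed

lemma conj_idem: assumes x: "x\<in>S" and e: "e\<in>E" shows "x\<cdot>(e\<cdot>iv x) \<in> E"
proof -
  have eS: "e\<in>S" using e by simp
  have "x\<cdot>(e\<cdot>iv x)\<cdot>(x\<cdot>(e\<cdot>iv x)) = x\<cdot>(e\<cdot>((iv x\<cdot>x)\<cdot>(e\<cdot>iv x)))" using x eS by (simp add: mult_assoc)
  also have "\<dots> = x\<cdot>((iv x\<cdot>x)\<cdot>(e\<cdot>(e\<cdot>iv x)))" using x e by (simp add: idems_left_commute)
  also have "\<dots> = x\<cdot>(e\<cdot>iv x)" using x e by (simp add: mult_assoc idem_left_absorb mult_inv_mult_left)
  finally show ?thesis unfolding idems_iff using x eS by simp
qed

lemma conj_idem': "x\<in>S \<Longrightarrow> e\<in>E \<Longrightarrow> iv x\<cdot>(e\<cdot>x) \<in> E"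
  using conj_idem[of "iv x" e] by simp

abbreviation \<sigma> where "\<sigma> \<equiv> sigma S m"

lemma sigma_iff: "(s,t)\<in>\<sigma> \<longleftrightarrow> s\<in>S \<and> t\<in>S \<and> (\<exists>e\<in>E. e\<cdot>s = e\<cdot>t)"
  unfolding sigma_def by simp

lemma sigma_refl: "s\<in>S \<Longrightarrow> (s,s)\<in>\<sigma>" unfolding sigma_iff using mult_inv_idem by blast
lemma sigma_sym: "(s,t)\<in>\<sigma> \<Longrightarrow> (t,s)\<in>\<sigma>" unfolding sigma_iff by metis
lemma sigma_trans: assumes "(s,t)\<in>\<sigma>" "(t,u)\<in>\<sigma>" shows "(s,u)\<in>\<sigma>"
proof -
  obtain e g where e: "e\<in>E" "e\<cdot>s = e\<cdot>t" and g: "g\<in>E" "g\<cdot>t = g\<cdot>u" and S: "s\<in>S" "t\<in>S" "u\<in>S"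
    using assms unfolding sigma_iff by blast
  have eS: "e\<in>S" "g\<in>S" using e g by auto
  have "e\<cdot>g\<cdot>s = e\<cdot>g\<cdot>u"
  proof -
    have "e\<cdot>g\<cdot>s = g\<cdot>(e\<cdot>s)" using eS S by (simp add: idems_commute[OF e(1) g(1)] mult_assoc)
    also have "\<dots> = g\<cdot>(e\<cdot>t)" using e by simp
    also have "\<dots> = e\<cdot>(g\<cdot>t)" using idems_left_commute[OF g(1) e(1) S(2)] .
    also have "\<dots> = e\<cdot>(g\<cdot>u)" using g by simp
    finally show ?thesis using eS S by (simp add: mult_assoc)
  qed
  then show ?thesis unfolding sigma_iff using S idems_mult_closed[OF e(1) g(1)] by blast
qed

lemma sigma_equiv: "equiv S \<sigma>"
  unfolding equiv_def refl_on_def sym_def trans_def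
  using sigma_refl sigma_sym sigma_trans unfolding sigma_def by blast

lemma sigma_in: "(s,t)\<in>\<sigma> \<Longrightarrow> s\<in>S \<and> t\<in>S" unfolding sigma_iff by blast

lemma sigma_inv: assumes "(s,a)\<in>\<sigma>" shows "(iv s, iv a)\<in>\<sigma>"
proof -
  obtain e where e: "e\<in>E" "e\<cdot>s = e\<cdot>a" and S: "s\<in>S" "a\<in>S"
    using assms unfolding sigma_iff by blast
  have eS: "e\<in>S" using e by simp
  have h1: "iv s\<cdot>e = iv a\<cdot>e" using e(2) inv_mult[of e s] inv_mult[of e a] S eS inv_idem[OF e(1)] by simp
  define f1 where "f1 = iv s\<cdot>(e\<cdot>s)"
  define f2 where "f2 = iv a\<cdot>(e\<cdot>a)"
  have f1E: "f1\<in>E" unfolding f1_def using conj_idem'[OF S(1) e(1)] .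
  have f2E: "f2\<in>E" unfolding f2_def using conj_idem'[OF S(2) e(1)] .
  have f1s: "iv s\<cdot>e = f1\<cdot>iv s"
  proof -
    have "f1\<cdot>iv s = iv s\<cdot>(e\<cdot>(s\<cdot>iv s))" unfolding f1_def using S eS by (simp add: mult_assoc)
    also have "\<dots> = iv s\<cdot>((s\<cdot>iv s)\<cdot>e)" using idems_commute[OF e(1) mult_inv_idem[OF S(1)]] by simp
    also have "\<dots> = iv s\<cdot>e" using S eS by (simp add: mult_assoc inv_mult_inv_left)
    finally show ?thesis by simp
  qed
  have f2a: "iv a\<cdot>e = f2\<cdot>iv a"
  proof -
    have "f2\<cdot>iv a = iv a\<cdot>(e\<cdot>(a\<cdot>iv a))" unfolding f2_def using S eS by (simp add: mult_assoc)
    also have "\<dots> = iv a\<cdot>((a\<cdot>iv a)\<cdot>e)" using idems_commute[OF e(1) mult_inv_idem[OF S(2)]] by simp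
    also have "\<dots> = iv a\<cdot>e" using S eS by (simp add: mult_assoc inv_mult_inv_left)
    finally show ?thesis by simp
  qed
  have eq: "f1\<cdot>iv s = f2\<cdot>iv a" using h1 f1s f2a by simp
  have f12: "f1\<in>S" "f2\<in>S" using f1E f2E by auto
  have "f1\<cdot>f2\<cdot>iv s = f1\<cdot>f2\<cdot>iv a"
  proof -
    have "f1\<cdot>f2\<cdot>iv s = f2\<cdot>(f1\<cdot>iv s)" using f12 S idems_left_commute[OF f1E f2E] by (simp add: mult_assoc)
    also have "\<dots> = f2\<cdot>(f2\<cdot>iv a)" using eq by simp
    also have "\<dots> = f2\<cdot>iv a" using f2E S by (simp add: idem_left_absorb)
    also have "\<dots> = f1\<cdot>iv s" using eq by simp
    also have "\<dots> = f1\<cdot>(f1\<cdot>iv s)" using f1E S by (simp add: idem_left_absorb)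
    also have "\<dots> = f1\<cdot>(f2\<cdot>iv a)" using eq by simp
    finally show ?thesis using f12 S by (simp add: mult_assoc)
  qed
  then show ?thesis unfolding sigma_iff using S idems_mult_closed[OF f1E f2E] by auto
qed

lemma sigma_mult_cong: assumes "(s,a)\<in>\<sigma>" "(t,b)\<in>\<sigma>" shows "(s\<cdot>t, a\<cdot>b)\<in>\<sigma>"
proof -
  obtain e where e: "e\<in>E" "e\<cdot>s = e\<cdot>a" and S: "s\<in>S" "a\<in>S"
    using assms unfolding sigma_iff by blast
  obtain f where f: "f\<in>E" "f\<cdot>t = f\<cdot>b" and T: "t\<in>S" "b\<in>S"
    using assms unfolding sigma_iff by blast
  have eS: "e\<in>S" "f\<in>S" using e f by auto
  define h where "h = s\<cdot>(f\<cdot>iv s)"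
  have hE: "h\<in>E" unfolding h_def using conj_idem S f by simp
  have hS: "h\<in>S" using hE by simp
  have hs: "h\<cdot>s = s\<cdot>f"
  proof -
    have "h\<cdot>s = s\<cdot>(f\<cdot>(iv s\<cdot>s))" unfolding h_def using S eS by (simp add: mult_assoc)
    also have "\<dots> = s\<cdot>(iv s\<cdot>s\<cdot>f)" using idems_commute[OF f(1) inv_mult_idem[OF S(1)]] by simp
    finally show ?thesis using S eS by (simp add: mult_assoc mult_inv_mult_left)
  qed
  have hsz: "h\<cdot>(s\<cdot>z) = s\<cdot>(f\<cdot>z)" if z: "z\<in>S" for z
  proof -
    have "h\<cdot>(s\<cdot>z) = h\<cdot>s\<cdot>z" using hS S z by (simp add: mult_assoc)
    also have "\<dots> = s\<cdot>f\<cdot>z" using hs by simp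
    finally show ?thesis using S eS z by (simp add: mult_assoc)
  qed
  have "e\<cdot>h\<cdot>(s\<cdot>t) = e\<cdot>h\<cdot>(a\<cdot>b)"
  proof -
    have "e\<cdot>h\<cdot>(s\<cdot>t) = e\<cdot>(s\<cdot>(f\<cdot>t))" using hsz S T eS hS by (simp add: mult_assoc)
    also have "\<dots> = e\<cdot>(s\<cdot>(f\<cdot>b))" using f by simp
    also have "\<dots> = e\<cdot>(h\<cdot>(s\<cdot>b))" using hsz T by simp
    also have "\<dots> = h\<cdot>(e\<cdot>(s\<cdot>b))" using idems_left_commute[OF e(1) hE] S T by simp
    also have "\<dots> = h\<cdot>(e\<cdot>s\<cdot>b)" using S T eS by (simp add: mult_assoc)
    also have "\<dots> = h\<cdot>(e\<cdot>a\<cdot>b)" using e by simp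
    also have "\<dots> = e\<cdot>(h\<cdot>(a\<cdot>b))" using idems_left_commute[OF e(1) hE] S T eS by (simp add: mult_assoc)
    finally show ?thesis using S T eS hS by (simp add: mult_assoc)
  qed
  then show ?thesis unfolding sigma_iff using S T idems_mult_closed[OF e(1) hE] by auto
qed

lemma sigma_mult_idem: assumes s: "s\<in>S" and e: "e\<in>E" shows "(s, s\<cdot>e)\<in>\<sigma>"
proof -
  have eS: "e\<in>S" using e by simp
  have hE: "s\<cdot>(e\<cdot>iv s)\<in>E" using conj_idem s e by simp
  have h: "s\<cdot>(e\<cdot>iv s)\<cdot>s = s\<cdot>e"
  proof -
    have "s\<cdot>(e\<cdot>iv s)\<cdot>s = s\<cdot>(e\<cdot>(iv s\<cdot>s))" using s eS by (simp add: mult_assoc)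
    also have "\<dots> = s\<cdot>(iv s\<cdot>s\<cdot>e)" using idems_commute[OF e inv_mult_idem[OF s]] by simp
    finally show ?thesis using s eS by (simp add: mult_assoc mult_inv_mult_left)
  qed
  have "s\<cdot>(e\<cdot>iv s)\<cdot>(s\<cdot>e) = s\<cdot>(e\<cdot>iv s)\<cdot>s\<cdot>e" using s eS by (simp add: mult_assoc)
  also have "\<dots> = s\<cdot>e" using h s eS e by (simp add: mult_assoc idem_left_absorb)
  finally show ?thesis unfolding sigma_iff using s eS hE h by (metis mult_closed)
qed

abbreviation cls where "cls s \<equiv> \<sigma> `` {s}"

lemma cls_self: "s\<in>S \<Longrightarrow> s \<in> cls s" using sigma_refl by simp
lemma cls_eq: "(s,t) \<in> \<sigma> \<Longrightarrow> cls s = cls t" using equiv_class_eq[OF sigma_equiv] .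
lemma cls_eq_iff: "s\<in>S \<Longrightarrow> t\<in>S \<Longrightarrow> cls s = cls t \<longleftrightarrow> (s,t)\<in>\<sigma>"
  using eq_equiv_class_iff[OF sigma_equiv] by blast
lemma some_in_cls: "s\<in>S \<Longrightarrow> (s, SOME u. u \<in> cls s) \<in> \<sigma>"
  using someI[of "\<lambda>u. u \<in> cls s" s] cls_self by simp

lemma gmul_cls: assumes s: "s\<in>S" and t: "t\<in>S" shows "gmul S m (cls s) (cls t) = cls (s\<cdot>t)"
proof -
  have "(s\<cdot>t, (SOME u. u \<in> cls s) \<cdot> (SOME u. u \<in> cls t)) \<in> \<sigma>"
    using sigma_mult_cong[OF some_in_cls[OF s] some_in_cls[OF t]] .
  then show ?thesis unfolding gmul_def using cls_eq by simp
qed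

lemma ginv_cls: assumes s: "s\<in>S" shows "ginv S m (cls s) = cls (iv s)"
proof -
  have "(iv s, iv (SOME u. u \<in> cls s)) \<in> \<sigma>"
    using sigma_inv[OF some_in_cls[OF s]] .
  then show ?thesis unfolding ginv_def using cls_eq by simp
qed

end

locale E_unitary_semigroup = inv_semigroup +
  assumes is_E_unitary: "E_unitary S m"
begin

lemma E_unitaryD: assumes "e\<in>E" "t\<in>S" "g\<in>E" "e = g\<cdot>t" shows "t\<in>E"
  using is_E_unitary assms idem_in[OF assms(1)] unfolding E_unitary_def nat_le_def by blast

lemma sigma_inv_mult_idem: assumes "(s,t)\<in>\<sigma>" shows "iv s\<cdot>t \<in> E"
proof -
  obtain e where e: "e\<in>E" "e\<cdot>s = e\<cdot>t" and S: "s\<in>S" "t\<in>S"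
    using assms unfolding sigma_iff by blast
  have eS: "e\<in>S" using e by simp
  define g where "g = iv s\<cdot>(e\<cdot>s)"
  have gE: "g\<in>E" unfolding g_def using conj_idem'[OF S(1) e(1)] .
  have "g\<cdot>(iv s\<cdot>t) = iv s\<cdot>(e\<cdot>((s\<cdot>iv s)\<cdot>t))" unfolding g_def using S eS by (simp add: mult_assoc)
  also have "\<dots> = iv s\<cdot>((s\<cdot>iv s)\<cdot>(e\<cdot>t))" using idems_left_commute[OF e(1) mult_inv_idem[OF S(1)]] S by simp
  also have "\<dots> = iv s\<cdot>(e\<cdot>t)" using S eS by (simp add: mult_assoc inv_mult_inv_left)
  also have "\<dots> = g" unfolding g_def using e by simp
  finally show ?thesis using E_unitaryD[OF gE _ gE] S by simp
qed

lemma sigma_mult_inv_idem: assumes "(s,t)\<in>\<sigma>" shows "s\<cdot>iv t \<in> E"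
  using sigma_inv_mult_idem[OF sigma_inv[OF assms]] sigma_in[OF assms] by simp

lemma sigma_eq_if_range_eq: assumes st: "(s,t)\<in>\<sigma>" and r: "s\<cdot>iv s = t\<cdot>iv t" shows "s = t"
proof -
  have S: "s\<in>S" "t\<in>S" using sigma_in st by auto
  define g where "g = iv t\<cdot>s"
  have gE: "g\<in>E" unfolding g_def using sigma_inv_mult_idem[OF sigma_sym[OF st]] .
  have g2: "iv s\<cdot>t = g" unfolding g_def using inv_mult[of "iv t" s] S gE unfolding g_def by simp
  have s_eq: "s = t\<cdot>g"
  proof -
    have "s = s\<cdot>iv s\<cdot>s" using mult_inv_mult S by simp
    also have "\<dots> = t\<cdot>iv t\<cdot>s" using r by simp
    finally show ?thesis using S by (simp add: mult_assoc g_def)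
  qed
  have t_eq: "t = s\<cdot>g"
  proof -
    have "t = t\<cdot>iv t\<cdot>t" using mult_inv_mult S by simp
    also have "\<dots> = s\<cdot>iv s\<cdot>t" using r by simp
    finally show ?thesis using S by (simp add: mult_assoc g2[symmetric])
  qed
  have "s = s\<cdot>g\<cdot>g" using s_eq t_eq by simp
  also have "\<dots> = s\<cdot>g" using S gE by (simp add: mult_assoc)
  finally show ?thesis using t_eq by simp
qed

lemma sigma_eq_if_domain_eq: assumes st: "(s,t)\<in>\<sigma>" and r: "iv s\<cdot>s = iv t\<cdot>t" shows "s = t"
proof -
  have S: "s\<in>S" "t\<in>S" using sigma_in st by auto
  define g where "g = s\<cdot>iv t"
  have gE: "g\<in>E" unfolding g_def using sigma_mult_inv_idem[OF st] .
  have g2: "t\<cdot>iv s = g" using inv_mult[of s "iv t"] S gE unfolding g_def by simp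
  have s_eq: "s = g\<cdot>t"
  proof -
    have "s = s\<cdot>(iv s\<cdot>s)" using mult_inv_mult'[OF S(1)] by simp
    also have "\<dots> = s\<cdot>(iv t\<cdot>t)" using r by simp
    finally show ?thesis using S by (simp add: mult_assoc g_def)
  qed
  have t_eq: "t = g\<cdot>s"
  proof -
    have "t = t\<cdot>(iv t\<cdot>t)" using mult_inv_mult'[OF S(2)] by simp
    also have "\<dots> = t\<cdot>(iv s\<cdot>s)" using r by simp
    finally show ?thesis using S by (simp add: mult_assoc g2[symmetric])
  qed
  have "s = g\<cdot>(g\<cdot>s)" using s_eq t_eq by simp
  also have "\<dots> = g\<cdot>s" using S gE by (simp add: idem_left_absorb)
  finally show ?thesis using t_eq by simp
qed

end

locale group_semilattice = inv_semigroup A mA for A mA +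
  assumes central: "\<And>e a. e \<in> idems A mA \<Longrightarrow> a \<in> A \<Longrightarrow> mA e a = mA a e"
begin

notation mA (infixl "\<cdot>" 70)

lemma mult_inv_eq_inv_mult: assumes a: "a\<in>A" shows "a\<cdot>iv a = iv a\<cdot>a"
proof -
  have range_absorbs: "a\<cdot>iv a = (iv a\<cdot>a)\<cdot>(a\<cdot>iv a)"
  proof -
    have "a\<cdot>iv a = iv a\<cdot>a\<cdot>a\<cdot>iv a" using central[OF inv_mult_idem[OF a] a] a mult_inv_mult[OF a] by (simp add: mult_assoc)
    then show ?thesis using a by (simp add: mult_assoc)
  qed
  have domain_absorbs: "iv a\<cdot>a = (a\<cdot>iv a)\<cdot>(iv a\<cdot>a)"
  proof -
    have "iv a = a\<cdot>iv a\<cdot>iv a" using central[OF mult_inv_idem[OF a] inv_closed[OF a]] a inv_mult_inv[OF a] by (simp add: mult_assoc)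
    then have "iv a\<cdot>a = a\<cdot>iv a\<cdot>iv a\<cdot>a" by simp
    then show ?thesis using a by (simp add: mult_assoc)
  qed
  show ?thesis using range_absorbs domain_absorbs idems_commute[OF mult_inv_idem[OF a] inv_mult_idem[OF a]] by simp
qed

lemma Agrp_iff: "a \<in> Agrp A mA g \<longleftrightarrow> a\<in>A \<and> a\<cdot>iv a = g"
  unfolding Agrp_def using mult_inv_eq_inv_mult by auto

lemma Agrp_in: "a \<in> Agrp A mA g \<Longrightarrow> a \<in> A" by (simp add: Agrp_iff)
lemma Agrp_mult_inv: "a \<in> Agrp A mA g \<Longrightarrow> a\<cdot>iv a = g" by (simp add: Agrp_iff)
lemma Agrp_idem: "a \<in> Agrp A mA g \<Longrightarrow> g \<in> E" using Agrp_iff mult_inv_idem by auto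

lemma idem_in_Agrp: "e \<in> E \<Longrightarrow> e \<in> Agrp A mA e" by (simp add: Agrp_iff)

lemma Agrp_idem_eq: "e \<in> E \<Longrightarrow> e \<in> Agrp A mA g \<Longrightarrow> e = g" by (simp add: Agrp_iff)

lemma Agrp_left_unit: assumes "a \<in> Agrp A mA g" shows "g\<cdot>a = a"
proof -
  have a: "a\<in>A" "a\<cdot>iv a = g" using assms Agrp_iff by auto
  show ?thesis using a mult_inv_mult[OF a(1)] by simp
qed

lemma Agrp_right_unit: assumes "a \<in> Agrp A mA g" shows "a\<cdot>g = a"
  using Agrp_left_unit[OF assms] central[OF Agrp_idem[OF assms] Agrp_in[OF assms]] by simp

lemma Agrp_left_absorb: assumes "a \<in> Agrp A mA g" "k \<in> E" "k\<cdot>g = g" shows "k\<cdot>a = a"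
proof -
  have g: "g\<in>E" "a\<in>A" using assms Agrp_idem Agrp_in by auto
  have "k\<cdot>a = k\<cdot>(g\<cdot>a)" using Agrp_left_unit[OF assms(1)] by simp
  also have "\<dots> = g\<cdot>a" using assms g by (simp add: mult_assoc[symmetric])
  finally show ?thesis using Agrp_left_unit[OF assms(1)] by simp
qed

lemma idem_mult_in_Agrp: assumes e: "e\<in>E" and a: "a\<in>A" shows "e\<cdot>a \<in> Agrp A mA (e\<cdot>(a\<cdot>iv a))"
proof -
  have eS: "e\<in>A" using e by simp
  have "e\<cdot>a\<cdot>iv (e\<cdot>a) = e\<cdot>(a\<cdot>iv a\<cdot>e)" using a eS e by (simp add: inv_mult mult_assoc)
  also have "\<dots> = e\<cdot>(e\<cdot>(a\<cdot>iv a))" using idems_commute[OF e mult_inv_idem[OF a]] by simp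
  finally show ?thesis using a e eS by (simp add: Agrp_iff idem_left_absorb)
qed

lemma Agrp_conj_cancel: assumes c: "c \<in> Agrp A mA g" and a: "a \<in> Agrp A mA g" and b: "b \<in> Agrp A mA g"
  and eq: "c\<cdot>a\<cdot>iv c = c\<cdot>b\<cdot>iv c" shows "a = b"
proof -
  have A: "c\<in>A" "a\<in>A" "b\<in>A" "g\<in>E" using a b c Agrp_in Agrp_idem by auto
  have ga: "g\<cdot>a\<cdot>g = a" using Agrp_left_unit[OF a] Agrp_right_unit[OF a] by simp
  have gb: "g\<cdot>b\<cdot>g = b" using Agrp_left_unit[OF b] Agrp_right_unit[OF b] by simp
  have civ: "iv c\<cdot>c = g" using c mult_inv_eq_inv_mult A Agrp_iff by auto
  have "iv c\<cdot>(c\<cdot>a\<cdot>iv c)\<cdot>c = iv c\<cdot>(c\<cdot>b\<cdot>iv c)\<cdot>c" using eq by simp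
  then have "(iv c\<cdot>c)\<cdot>a\<cdot>(iv c\<cdot>c) = (iv c\<cdot>c)\<cdot>b\<cdot>(iv c\<cdot>c)" using A by (simp add: mult_assoc)
  then show ?thesis using ga gb civ by simp
qed

lemma endo_inv: assumes ph: "endo A mA \<phi>" and a: "a\<in>A" shows "\<phi> (iv a) = iv (\<phi> a)"
proof -
  have closed: "\<And>x. x\<in>A \<Longrightarrow> \<phi> x \<in> A" and hom: "\<And>x y. x\<in>A \<Longrightarrow> y\<in>A \<Longrightarrow> \<phi> (x\<cdot>y) = \<phi> x \<cdot> \<phi> y"
    using ph unfolding endo_def by auto
  show ?thesis
  proof (rule inv_unique)
    show "\<phi> a \<cdot> \<phi> (iv a) \<cdot> \<phi> a = \<phi> a" using hom[of a "iv a"] hom[of "a\<cdot>iv a" a] a mult_inv_mult[OF a] by simp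
    show "\<phi> (iv a) \<cdot> \<phi> a \<cdot> \<phi> (iv a) = \<phi> (iv a)" using hom[of "iv a" a] hom[of "iv a\<cdot>a" "iv a"] a inv_mult_inv[OF a] by simp
  qed (use closed a in auto)
qed

lemma endo_Agrp: assumes ph: "endo A mA \<phi>" and a: "a \<in> Agrp A mA g" shows "\<phi> a \<in> Agrp A mA (\<phi> g)"
proof -
  have A: "a\<in>A" using a Agrp_in by auto
  have closed: "\<And>x. x\<in>A \<Longrightarrow> \<phi> x \<in> A" and hom: "\<And>x y. x\<in>A \<Longrightarrow> y\<in>A \<Longrightarrow> \<phi> (x\<cdot>y) = \<phi> x \<cdot> \<phi> y"
    using ph unfolding endo_def by auto
  have "\<phi> a \<cdot> iv (\<phi> a) = \<phi> (a\<cdot>iv a)" using hom[of a "iv a"] endo_inv[OF ph A] A by simp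
  then show ?thesis using a A closed Agrp_iff by auto
qed

end

locale twisted_module_on = S: inv_semigroup S mS + A: group_semilattice A mA
  for S :: "'s set" and mS and A :: "'a set" and mA +
  fixes \<alpha> :: "'s \<Rightarrow> 'a" and lam :: "'s \<Rightarrow> 'a \<Rightarrow> 'a" and f :: "'s \<Rightarrow> 's \<Rightarrow> 'a"
  assumes twisted_module: "twisted_module S mS A mA \<alpha> lam f"
begin

notation mS (infixl "\<cdot>" 70)
notation mA (infixl "\<odot>" 70)

lemma alpha_bij: "bij_betw \<alpha> S.E A.E"
  using twisted_module unfolding twisted_module_def by blast
lemma alpha_mult: "e\<in>S.E \<Longrightarrow> g\<in>S.E \<Longrightarrow> \<alpha> (e\<cdot>g) = \<alpha> e \<odot> \<alpha> g"
  using twisted_module unfolding twisted_module_def by blast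
lemma lam_endo: "s\<in>S \<Longrightarrow> endo A mA (lam s)"
  using twisted_module unfolding twisted_module_def by blast
lemma lam_rel_invertible: "s\<in>S \<Longrightarrow> rel_invertible A mA (lam s)"
  using twisted_module unfolding twisted_module_def by blast
lemma f_in_Agrp: "s\<in>S \<Longrightarrow> t\<in>S \<Longrightarrow> f s t \<in> Agrp A mA (\<alpha> (s\<cdot>t\<cdot>S.iv t\<cdot>S.iv s))"
  using twisted_module unfolding twisted_module_def by blast
lemma lam_idem: "e\<in>S.E \<Longrightarrow> a\<in>A \<Longrightarrow> lam e a = \<alpha> e \<odot> a"
  using twisted_module unfolding twisted_module_def by blast
lemma lam_alpha: "s\<in>S \<Longrightarrow> e\<in>S.E \<Longrightarrow> lam s (\<alpha> e) = \<alpha> (s\<cdot>e\<cdot>S.iv s)"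
  using twisted_module unfolding twisted_module_def by blast
lemma lam_lam: "s\<in>S \<Longrightarrow> t\<in>S \<Longrightarrow> a\<in>A \<Longrightarrow> lam s (lam t a) = f s t \<odot> lam (s\<cdot>t) a \<odot> A.iv (f s t)"
  using twisted_module unfolding twisted_module_def by blast
lemma f_cocycle: "s\<in>S \<Longrightarrow> t\<in>S \<Longrightarrow> u\<in>S \<Longrightarrow> lam s (f t u) \<odot> f s (t\<cdot>u) = f s t \<odot> f (s\<cdot>t) u"
  using twisted_module unfolding twisted_module_def by blast

lemma alpha_idem[simp]: "e\<in>S.E \<Longrightarrow> \<alpha> e \<in> A.E"
  by (rule bij_betw_apply[OF alpha_bij])
lemma alpha_in[simp]: "e\<in>S.E \<Longrightarrow> \<alpha> e \<in> A"
  by (rule A.idem_in[OF alpha_idem])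
lemma alpha_inj: "e\<in>S.E \<Longrightarrow> g\<in>S.E \<Longrightarrow> \<alpha> e = \<alpha> g \<Longrightarrow> e = g"
  using inj_onD[OF bij_betw_imp_inj_on[OF alpha_bij]] by blast
lemma alpha_surj: assumes "h\<in>A.E" shows "\<exists>g\<in>S.E. \<alpha> g = h"
proof -
  have "h \<in> \<alpha> ` S.E" using bij_betw_imp_surj_on[OF alpha_bij] assms by simp
  then show ?thesis by blast
qed

lemma lam_closed[simp]: "s\<in>S \<Longrightarrow> a\<in>A \<Longrightarrow> lam s a \<in> A"
  using lam_endo[of s] unfolding endo_def by blast
lemma lam_mult: "s\<in>S \<Longrightarrow> a\<in>A \<Longrightarrow> b\<in>A \<Longrightarrow> lam s (a\<odot>b) = lam s a \<odot> lam s b"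
  using lam_endo[of s] unfolding endo_def by blast

lemma lam_Agrp: assumes s: "s\<in>S" and a: "a \<in> Agrp A mA (\<alpha> (S.iv s\<cdot>s))"
  shows "lam s a \<in> Agrp A mA (\<alpha> (s\<cdot>S.iv s))"
proof -
  have "lam s a \<in> Agrp A mA (lam s (\<alpha> (S.iv s\<cdot>s)))" using A.endo_Agrp[OF lam_endo[OF s] a] .
  moreover have "lam s (\<alpha> (S.iv s\<cdot>s)) = \<alpha> (s\<cdot>S.iv s)" using lam_alpha[OF s S.inv_mult_idem[OF s]] s
    by (simp add: S.mult_assoc S.mult_inv_mult_left)
  ultimately show ?thesis by simp
qed

lemma lam_inj_on_Agrp: assumes s: "s\<in>S" and a: "a \<in> Agrp A mA (\<alpha> (S.iv s\<cdot>s))" and b: "b \<in> Agrp A mA (\<alpha> (S.iv s\<cdot>s))"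
  and eq: "lam s a = lam s b" shows "a = b"
proof -
  have aA: "a\<in>A" "b\<in>A" using a b A.Agrp_in by auto
  have c: "f (S.iv s) s \<in> Agrp A mA (\<alpha> (S.iv s\<cdot>s))"
    using f_in_Agrp[of "S.iv s" s] s by (simp add: S.mult_assoc S.inv_mult_inv_left)
  have la: "lam (S.iv s\<cdot>s) a = a" using lam_idem[OF S.inv_mult_idem[OF s] aA(1)] A.Agrp_left_unit[OF a] by simp
  have lb: "lam (S.iv s\<cdot>s) b = b" using lam_idem[OF S.inv_mult_idem[OF s] aA(2)] A.Agrp_left_unit[OF b] by simp
  have "lam (S.iv s) (lam s a) = lam (S.iv s) (lam s b)" using eq by simp
  then have "f (S.iv s) s \<odot> a \<odot> A.iv (f (S.iv s) s) = f (S.iv s) s \<odot> b \<odot> A.iv (f (S.iv s) s)"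
    using lam_lam[of "S.iv s" s a] lam_lam[of "S.iv s" s b] s aA la lb by simp
  then show ?thesis using A.Agrp_conj_cancel[OF c a b] by simp
qed

text \<open>Relative invertibility makes \<open>\<lambda>\<^sub>s(e\<^sub>\<phi>) = \<alpha>(sgs\<^sup>-\<^sup>1)\<close> (\<open>\<alpha> g = e\<^sub>\<phi>\<close>) an identity of \<open>\<lambda>\<^sub>s(A)\<close>,
  and \<open>\<alpha>(ss\<^sup>-\<^sup>1)\<close> lies above it.\<close>
lemma range_idem_lam: assumes s: "s\<in>S" and a: "a\<in>A" shows "\<alpha> (s\<cdot>S.iv s) \<odot> lam s a = lam s a"
proof -
  obtain \<psi> e where e: "e \<in> A.E" and idf: "is_identity_of mA (lam s e) (lam s ` A)"
    using lam_rel_invertible[OF s] unfolding rel_invertible_def by blast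
  obtain g where g: "g\<in>S.E" "\<alpha> g = e" using alpha_surj[OF e] by blast
  have gS: "g\<in>S" using g by simp
  have le: "lam s e = \<alpha> (s\<cdot>g\<cdot>S.iv s)" using lam_alpha[OF s g(1)] g by simp
  have kE: "s\<cdot>g\<cdot>S.iv s \<in> S.E" using S.conj_idem[OF s g(1)] s gS by (simp add: S.mult_assoc)
  have identity: "lam s e \<odot> lam s a = lam s a" using idf a unfolding is_identity_of_def by blast
  have range_above: "\<alpha> (s\<cdot>S.iv s) \<odot> \<alpha> (s\<cdot>g\<cdot>S.iv s) = \<alpha> (s\<cdot>g\<cdot>S.iv s)"
  proof -
    have "\<alpha> (s\<cdot>S.iv s) \<odot> \<alpha> (s\<cdot>g\<cdot>S.iv s) = \<alpha> (s\<cdot>S.iv s \<cdot> (s\<cdot>g\<cdot>S.iv s))" using alpha_mult[OF S.mult_inv_idem[OF s] kE] by simp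
    also have "s\<cdot>S.iv s \<cdot> (s\<cdot>g\<cdot>S.iv s) = s\<cdot>g\<cdot>S.iv s" using s gS by (simp add: S.mult_assoc S.mult_inv_mult_left)
    finally show ?thesis .
  qed
  have "\<alpha> (s\<cdot>S.iv s) \<odot> lam s a = \<alpha> (s\<cdot>S.iv s) \<odot> (\<alpha> (s\<cdot>g\<cdot>S.iv s) \<odot> lam s a)" using identity le by simp
  also have "\<dots> = \<alpha> (s\<cdot>g\<cdot>S.iv s) \<odot> lam s a" using range_above s a kE S.mult_inv_idem[OF s] by (simp add: A.mult_assoc[symmetric])
  finally show ?thesis using identity le by simp
qed

end

locale sieben_module = twisted_module_on + S: E_unitary_semigroup S mS +
  assumes sieben: "\<And>s e. s \<in> S \<Longrightarrow> e \<in> idems S mS \<Longrightarrow>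
      f s e = \<alpha> (mS (mS s e) (sinv S mS s)) \<and> f e s = \<alpha> (mS (mS e s) (sinv S mS s))"
begin

abbreviation \<theta> where "\<theta> \<equiv> theta S mS A mA \<alpha> lam"
abbreviation \<theta>inv where "\<theta>inv \<equiv> theta_inv S mS A mA \<alpha> lam"
abbreviation D where "D \<equiv> Dx S mS A mA \<alpha>"

lemma f_idem_right: "s\<in>S \<Longrightarrow> e\<in>S.E \<Longrightarrow> f s e = \<alpha> (s\<cdot>e\<cdot>S.iv s)"
  using sieben by blast
lemma f_idem_left: "s\<in>S \<Longrightarrow> e\<in>S.E \<Longrightarrow> f e s = \<alpha> (e\<cdot>s\<cdot>S.iv s)"
  using sieben by blast

lemma lam_mult_idem_right:
  assumes s: "s\<in>S" and h: "h\<in>S.E" and b: "b \<in> Agrp A mA (\<alpha> h)"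
  shows "lam (s\<cdot>h) b = lam s b"
proof -
  have hS: "h\<in>S" and bA: "b\<in>A" using h A.Agrp_in[OF b] by auto
  have k: "s\<cdot>h\<cdot>S.iv s \<in> S.E" using S.conj_idem[OF s h] s hS by (simp add: S.mult_assoc)
  have "lam (s\<cdot>h) b \<in> Agrp A mA (lam (s\<cdot>h) (\<alpha> h))" using A.endo_Agrp[OF lam_endo b] s hS by simp
  also have "lam (s\<cdot>h) (\<alpha> h) = \<alpha> (s\<cdot>h\<cdot>S.iv s)"
    using lam_alpha[of "s\<cdot>h" h] s h hS by (simp add: S.inv_mult S.mult_assoc S.idem_left_absorb)
  finally have sh: "lam (s\<cdot>h) b \<in> Agrp A mA (\<alpha> (s\<cdot>h\<cdot>S.iv s))" .
  have "lam h b = b" using lam_idem[OF h bA] A.Agrp_left_unit[OF b] by simp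
  then have "lam s b = f s h \<odot> lam (s\<cdot>h) b \<odot> A.iv (f s h)" using lam_lam[OF s hS bA] by simp
  also have "\<dots> = \<alpha> (s\<cdot>h\<cdot>S.iv s) \<odot> lam (s\<cdot>h) b \<odot> \<alpha> (s\<cdot>h\<cdot>S.iv s)"
    using f_idem_right[OF s h] k by simp
  also have "\<dots> = lam (s\<cdot>h) b" using A.Agrp_left_unit[OF sh] A.Agrp_right_unit[OF sh] by simp
  finally show ?thesis by simp
qed

lemma the_domain_in_cls: assumes u0: "u0 \<in> S.cls s"
  shows "(THE u. u \<in> S.cls s \<and> \<alpha> (S.iv u\<cdot>u) = \<alpha> (S.iv u0\<cdot>u0)) = u0"
proof (rule the_equality)
  show "u0 \<in> S.cls s \<and> \<alpha> (S.iv u0\<cdot>u0) = \<alpha> (S.iv u0\<cdot>u0)" using u0 by simp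
  fix u assume u: "u \<in> S.cls s \<and> \<alpha> (S.iv u\<cdot>u) = \<alpha> (S.iv u0\<cdot>u0)"
  have su: "(s,u)\<in>S.\<sigma>" "(s,u0)\<in>S.\<sigma>" using u u0 by auto
  have S: "u\<in>S" "u0\<in>S" using S.sigma_in su by auto
  have "S.iv u\<cdot>u = S.iv u0\<cdot>u0" by (rule alpha_inj[rotated 2]) (use u S in auto)
  moreover have "(u,u0)\<in>S.\<sigma>" using S.sigma_trans[OF S.sigma_sym[OF su(1)] su(2)] .
  ultimately show "u = u0" using S.sigma_eq_if_domain_eq by blast
qed

lemma the_range_in_cls: assumes u0: "u0 \<in> S.cls s"
  shows "(THE u. u \<in> S.cls s \<and> \<alpha> (u\<cdot>S.iv u) = \<alpha> (u0\<cdot>S.iv u0)) = u0"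
proof (rule the_equality)
  show "u0 \<in> S.cls s \<and> \<alpha> (u0\<cdot>S.iv u0) = \<alpha> (u0\<cdot>S.iv u0)" using u0 by simp
  fix u assume u: "u \<in> S.cls s \<and> \<alpha> (u\<cdot>S.iv u) = \<alpha> (u0\<cdot>S.iv u0)"
  have su: "(s,u)\<in>S.\<sigma>" "(s,u0)\<in>S.\<sigma>" using u u0 by auto
  have S: "u\<in>S" "u0\<in>S" using S.sigma_in su by auto
  have "u\<cdot>S.iv u = u0\<cdot>S.iv u0" by (rule alpha_inj[rotated 2]) (use u S in auto)
  moreover have "(u,u0)\<in>S.\<sigma>" using S.sigma_trans[OF S.sigma_sym[OF su(1)] su(2)] .
  ultimately show "u = u0" using S.sigma_eq_if_range_eq by blast
qed

lemma theta_cls: assumes u: "u \<in> S.cls s" and a: "a \<odot> A.iv a = \<alpha> (S.iv u\<cdot>u)"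
  shows "\<theta> (S.cls s) a = lam u a"
  unfolding theta_def using the_domain_in_cls[OF u] a by simp

lemma Dx_ginv_clsD: assumes s: "s\<in>S" and a: "a \<in> D (ginv S mS (S.cls s))"
  shows "\<exists>v\<in>S.cls s. a \<in> Agrp A mA (\<alpha> (S.iv v\<cdot>v))"
proof -
  obtain u where u: "u \<in> S.cls (S.iv s)" "a \<in> Agrp A mA (\<alpha> (u\<cdot>S.iv u))"
    using a unfolding Dx_def S.ginv_cls[OF s] by blast
  have "(S.iv s, u) \<in> S.\<sigma>" using u by simp
  then have "(S.iv (S.iv s), S.iv u) \<in> S.\<sigma>" by (rule S.sigma_inv)
  then have inv_cls: "S.iv u \<in> S.cls s" using s by simp
  have uS: "u\<in>S" using u S.sigma_in by auto
  have inv_Agrp: "a \<in> Agrp A mA (\<alpha> (S.iv (S.iv u)\<cdot>S.iv u))" using u(2) uS by simp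
  show ?thesis using inv_cls inv_Agrp by (rule bexI[rotated])
qed

lemma Dx_ginv_clsI: assumes s: "s\<in>S" and v: "v \<in> S.cls s" and a: "a \<in> Agrp A mA (\<alpha> (S.iv v\<cdot>v))"
  shows "a \<in> D (ginv S mS (S.cls s))"
proof -
  have vS: "v\<in>S" using v S.sigma_in by auto
  have "(S.iv s, S.iv v) \<in> S.\<sigma>" using v S.sigma_inv by simp
  then have inv_cls: "S.iv v \<in> S.cls (S.iv s)" by simp
  have inv_Agrp: "a \<in> Agrp A mA (\<alpha> (S.iv v\<cdot>S.iv (S.iv v)))" using a vS by simp
  show ?thesis unfolding Dx_def S.ginv_cls[OF s] using inv_cls inv_Agrp by (rule UN_I)
qed

lemma inj_on_theta: assumes s: "s\<in>S"
  shows "inj_on (\<theta> (S.cls s)) (D (ginv S mS (S.cls s)))"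
proof (rule inj_onI)
  fix a b assume a: "a \<in> D (ginv S mS (S.cls s))" and b: "b \<in> D (ginv S mS (S.cls s))"
    and eq: "\<theta> (S.cls s) a = \<theta> (S.cls s) b"
  obtain v where v: "v\<in>S.cls s" "a \<in> Agrp A mA (\<alpha> (S.iv v\<cdot>v))" using Dx_ginv_clsD[OF s a] by blast
  obtain w where w: "w\<in>S.cls s" "b \<in> Agrp A mA (\<alpha> (S.iv w\<cdot>w))" using Dx_ginv_clsD[OF s b] by blast
  have vS: "v\<in>S" "w\<in>S" using v w S.sigma_in by auto
  have ta: "\<theta> (S.cls s) a = lam v a" using theta_cls[OF v(1)] A.Agrp_mult_inv[OF v(2)] by simp
  have tb: "\<theta> (S.cls s) b = lam w b" using theta_cls[OF w(1)] A.Agrp_mult_inv[OF w(2)] by simp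
  have lv: "lam v a \<in> Agrp A mA (\<alpha> (v\<cdot>S.iv v))" using lam_Agrp[OF vS(1) v(2)] .
  have lw: "lam w b \<in> Agrp A mA (\<alpha> (w\<cdot>S.iv w))" using lam_Agrp[OF vS(2) w(2)] .
  have lvw: "lam v a = lam w b" using eq ta tb by simp
  have "\<alpha> (v\<cdot>S.iv v) = lam v a \<odot> A.iv (lam v a)" using A.Agrp_mult_inv[OF lv] by simp
  also have "\<dots> = lam w b \<odot> A.iv (lam w b)" using lvw by simp
  also have "\<dots> = \<alpha> (w\<cdot>S.iv w)" using A.Agrp_mult_inv[OF lw] by simp
  finally have "\<alpha> (v\<cdot>S.iv v) = \<alpha> (w\<cdot>S.iv w)" .
  then have vv: "v\<cdot>S.iv v = w\<cdot>S.iv w" by (rule alpha_inj[rotated 2]) (use vS in auto)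
  have sv: "(s,v)\<in>S.\<sigma>" "(s,w)\<in>S.\<sigma>" using v(1) w(1) by simp_all
  have "(v,w)\<in>S.\<sigma>" using S.sigma_trans[OF S.sigma_sym[OF sv(1)] sv(2)] .
  then have vw: "v = w" using S.sigma_eq_if_range_eq vv by blast
  show "a = b"
  proof (rule lam_inj_on_Agrp[OF vS(1) v(2)])
    show "b \<in> Agrp A mA (\<alpha> (S.iv v\<cdot>v))" using w(2) vw by simp
    show "lam v a = lam v b" using lvw vw by simp
  qed
qed

lemma theta_inv_range_idem: assumes s: "s\<in>S"
  shows "\<theta>inv (S.cls s) (\<alpha> (s\<cdot>S.iv s)) = \<alpha> (S.iv s\<cdot>s)"
proof -
  have g: "\<alpha> (S.iv s\<cdot>s) \<in> Agrp A mA (\<alpha> (S.iv s\<cdot>s))" using A.idem_in_Agrp s by simp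
  have D: "\<alpha> (S.iv s\<cdot>s) \<in> D (ginv S mS (S.cls s))" using Dx_ginv_clsI[OF s S.cls_self[OF s] g] .
  have "\<theta> (S.cls s) (\<alpha> (S.iv s\<cdot>s)) = lam s (\<alpha> (S.iv s\<cdot>s))"
    using theta_cls[OF S.cls_self[OF s]] A.Agrp_mult_inv[OF g] by simp
  also have "\<dots> = \<alpha> (s\<cdot>S.iv s)" using lam_alpha[OF s S.inv_mult_idem[OF s]] s by (simp add: S.mult_assoc S.mult_inv_mult_left)
  finally have "\<theta> (S.cls s) (\<alpha> (S.iv s\<cdot>s)) = \<alpha> (s\<cdot>S.iv s)" .
  then show ?thesis unfolding theta_inv_def using inv_into_f_eq[OF inj_on_theta[OF s] D] by simp
qed

lemma theta_domain_idem_mult: assumes s: "s\<in>S" and a: "a\<in>A"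
  shows "\<theta> (S.cls s) (\<alpha> (S.iv s\<cdot>s) \<odot> a) = lam s a"
proof -
  obtain g where g: "g\<in>S.E" "\<alpha> g = a \<odot> A.iv a" using alpha_surj[OF A.mult_inv_idem[OF a]] by blast
  define e where "e = S.iv s\<cdot>s"
  define h where "h = e\<cdot>g"
  have eE: "e\<in>S.E" unfolding e_def using s by simp
  have hE: "h\<in>S.E" unfolding h_def using S.idems_mult_closed[OF eE g(1)] .
  have hS: "h\<in>S" "e\<in>S" using hE eE by auto
  have b: "\<alpha> e \<odot> a \<in> Agrp A mA (\<alpha> h)"
    using A.idem_mult_in_Agrp[OF alpha_idem[OF eE] a] alpha_mult[OF eE g(1)] g(2) unfolding h_def by simp
  have u: "s\<cdot>h \<in> S.cls s" using S.sigma_mult_idem[OF s hE] by simp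
  have u_domain: "S.iv (s\<cdot>h)\<cdot>(s\<cdot>h) = h"
  proof -
    have "S.iv (s\<cdot>h)\<cdot>(s\<cdot>h) = h\<cdot>(e\<cdot>h)" unfolding e_def using s hS hE by (simp add: S.inv_mult S.mult_assoc)
    also have "e\<cdot>h = h" unfolding h_def using hS eE g(1) by (simp add: S.mult_assoc[symmetric])
    finally show ?thesis using hE by simp
  qed
  have "\<theta> (S.cls s) (\<alpha> e \<odot> a) = lam (s\<cdot>h) (\<alpha> e \<odot> a)"
    using theta_cls[OF u] A.Agrp_mult_inv[OF b] u_domain by simp
  also have "\<dots> = lam s (\<alpha> e \<odot> a)" using lam_mult_idem_right[OF s hE b] .
  also have "\<dots> = \<alpha> (s\<cdot>S.iv s) \<odot> lam s a"
    using lam_mult[OF s _ a] lam_alpha[OF s eE] s unfolding e_def by (simp add: S.mult_assoc S.mult_inv_mult_left)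
  also have "\<dots> = lam s a" using range_idem_lam[OF s a] .
  finally show ?thesis unfolding e_def .
qed

text \<open>Both absorption laws come from the cocycle identity at \<open>(s, e, t)\<close> for a suitable
  idempotent \<open>e\<close>: the normalisation turns every other factor into an idempotent absorbed by the
  group \<open>A\<^bsub>\<alpha>(stt\<^sup>-\<^sup>1s\<^sup>-\<^sup>1)\<^esub>\<close> containing \<open>f(s,t)\<close>.\<close>
lemma f_domain_absorb: assumes s: "s\<in>S" and t: "t\<in>S" shows "f s (S.iv s\<cdot>s\<cdot>t) = f s t"
proof -
  define e where "e = S.iv s\<cdot>s"
  have eE: "e\<in>S.E" unfolding e_def using s by simp
  have eS: "e\<in>S" using eE by simp
  define k where "k = s\<cdot>(t\<cdot>(S.iv t\<cdot>S.iv s))"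
  define q where "q = e\<cdot>(t\<cdot>S.iv t)"
  have qE: "q\<in>S.E" unfolding q_def using S.idems_mult_closed[OF eE S.mult_inv_idem[OF t]] .
  have cocycle: "lam s (f e t) \<odot> f s (e\<cdot>t) = f s e \<odot> f (s\<cdot>e) t" using f_cocycle[OF s eS t] .
  have f_et: "f e t = \<alpha> q" using f_idem_left[OF t eE] unfolding q_def using eS t by (simp add: S.mult_assoc)
  have lam_q: "lam s (\<alpha> q) = \<alpha> k" using lam_alpha[OF s qE] unfolding q_def k_def e_def using s t by (simp add: S.mult_assoc S.mult_inv_mult_left)
  have f_se: "f s e = \<alpha> (s\<cdot>S.iv s)" using f_idem_right[OF s eE] unfolding e_def using s by (simp add: S.mult_assoc S.mult_inv_mult_left)
  have se: "s\<cdot>e = s" unfolding e_def using s by (simp add: S.mult_assoc S.mult_inv_mult')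
  have f_s_et: "f s (e\<cdot>t) \<in> Agrp A mA (\<alpha> k)" using f_in_Agrp[of s "e\<cdot>t"] unfolding e_def k_def using s t
    by (simp add: S.mult_assoc S.inv_mult S.mult_inv_mult_left S.inv_mult_inv')
  have f_st: "f s t \<in> Agrp A mA (\<alpha> k)" using f_in_Agrp[OF s t] unfolding k_def using s t by (simp add: S.mult_assoc)
  have kE: "k\<in>S.E" unfolding k_def using S.conj_idem[OF s S.mult_inv_idem[OF t]] s t by (simp add: S.mult_assoc)
  have k_absorbs: "\<alpha> (s\<cdot>S.iv s) \<odot> \<alpha> k = \<alpha> k"
    using alpha_mult[OF S.mult_inv_idem[OF s] kE] unfolding k_def using s t by (simp add: S.mult_assoc S.mult_inv_mult_left)
  have "f s (e\<cdot>t) = f s t"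
  proof -
    have "f s (e\<cdot>t) = \<alpha> k \<odot> f s (e\<cdot>t)" using A.Agrp_left_unit[OF f_s_et] by simp
    also have "\<dots> = \<alpha> (s\<cdot>S.iv s) \<odot> f s t" using cocycle f_et lam_q f_se se by simp
    also have "\<dots> = f s t" using A.Agrp_left_absorb[OF f_st _ k_absorbs] s by simp
    finally show ?thesis .
  qed
  then show ?thesis unfolding e_def .
qed

lemma f_range_absorb: assumes s: "s\<in>S" and t: "t\<in>S" shows "f (s\<cdot>(t\<cdot>S.iv t)) t = f s t"
proof -
  define g where "g = t\<cdot>S.iv t"
  have gE: "g\<in>S.E" unfolding g_def using t by simp
  have gS: "g\<in>S" using gE by simp
  define k where "k = s\<cdot>(t\<cdot>(S.iv t\<cdot>S.iv s))"
  have cocycle: "lam s (f g t) \<odot> f s (g\<cdot>t) = f s g \<odot> f (s\<cdot>g) t" using f_cocycle[OF s gS t] .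
  have f_gt: "f g t = \<alpha> g" using f_idem_left[OF t gE] unfolding g_def using t by (simp add: S.mult_assoc S.mult_inv_mult_left)
  have lam_g: "lam s (\<alpha> g) = \<alpha> k" using lam_alpha[OF s gE] unfolding g_def k_def using s t by (simp add: S.mult_assoc)
  have gt: "g\<cdot>t = t" unfolding g_def using t by (simp add: S.mult_assoc S.mult_inv_mult')
  have f_sg: "f s g = \<alpha> k" using f_idem_right[OF s gE] unfolding g_def k_def using s t by (simp add: S.mult_assoc)
  have f_st: "f s t \<in> Agrp A mA (\<alpha> k)" using f_in_Agrp[OF s t] unfolding k_def using s t by (simp add: S.mult_assoc)
  have f_sg_t: "f (s\<cdot>g) t \<in> Agrp A mA (\<alpha> k)" using f_in_Agrp[of "s\<cdot>g" t] unfolding g_def k_def using s t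
    by (simp add: S.mult_assoc S.inv_mult S.mult_inv_mult_left)
  have "f s t = \<alpha> k \<odot> f s t" using A.Agrp_left_unit[OF f_st] by simp
  also have "\<dots> = \<alpha> k \<odot> f (s\<cdot>g) t" using cocycle f_gt lam_g gt f_sg by simp
  also have "\<dots> = f (s\<cdot>g) t" using A.Agrp_left_unit[OF f_sg_t] by simp
  finally show ?thesis unfolding g_def by simp
qed

definition nu where "nu s = (\<alpha> (s\<cdot>S.iv s), S.cls s)"

lemma theta_cls_range_idems: assumes s: "s\<in>S" and t: "t\<in>S"
  shows "\<theta> (S.cls s) (\<theta>inv (S.cls s) (\<alpha> (s\<cdot>S.iv s)) \<odot> \<alpha> (t\<cdot>S.iv t))
         = \<alpha> (s\<cdot>t\<cdot>S.iv (s\<cdot>t))"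
proof -
  have "\<theta> (S.cls s) (\<theta>inv (S.cls s) (\<alpha> (s\<cdot>S.iv s)) \<odot> \<alpha> (t\<cdot>S.iv t))
      = lam s (\<alpha> (t\<cdot>S.iv t))" using theta_inv_range_idem[OF s] theta_domain_idem_mult[OF s alpha_in[OF S.mult_inv_idem[OF t]]] by simp
  also have "\<dots> = \<alpha> (s\<cdot>t\<cdot>S.iv (s\<cdot>t))" using lam_alpha[OF s S.mult_inv_idem[OF t]] s t by (simp add: S.mult_assoc S.inv_mult)
  finally show ?thesis .
qed

lemma inj_on_nu: "inj_on nu S"
proof (rule inj_onI)
  fix s t assume s: "s\<in>S" and t: "t\<in>S" and eq: "nu s = nu t"
  have "\<alpha> (s\<cdot>S.iv s) = \<alpha> (t\<cdot>S.iv t)" and cls: "S.cls s = S.cls t" using eq unfolding nu_def by auto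
  then have "s\<cdot>S.iv s = t\<cdot>S.iv t" using alpha_inj s t by simp
  moreover have "(s,t)\<in>S.\<sigma>" using S.cls_eq_iff[OF s t] cls by simp
  ultimately show "s = t" using S.sigma_eq_if_range_eq by blast
qed

lemma nu_in_cp_carrier: assumes s: "s\<in>S" shows "nu s \<in> cp_carrier S mS A mA \<alpha>"
proof -
  have "S.cls s \<in> GS S mS" unfolding GS_def using s by (rule quotientI)
  moreover have e: "\<alpha> (s\<cdot>S.iv s) \<in> A.E" using s by simp
  moreover have "\<alpha> (s\<cdot>S.iv s) \<in> D (S.cls s)" unfolding Dx_def
    using S.cls_self[OF s] A.idem_in_Agrp[OF e] by (rule UN_I)
  ultimately show ?thesis unfolding nu_def cp_carrier_def by simp
qed

lemma cp_carrier_subset_nu_image: "cp_carrier S mS A mA \<alpha> \<subseteq> nu ` S"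
proof
  fix p assume "p \<in> cp_carrier S mS A mA \<alpha>"
  then obtain e x where p: "p = (e,x)" and x: "x \<in> GS S mS" and e: "e \<in> A.E" "e \<in> D x"
    unfolding cp_carrier_def by blast
  obtain u where u: "u\<in>S" "x = S.cls u" using x unfolding GS_def by (rule quotientE)
  obtain t where t: "t \<in> x" "e \<in> Agrp A mA (\<alpha> (t\<cdot>S.iv t))" using e(2) unfolding Dx_def by blast
  have ut: "(u,t)\<in>S.\<sigma>" using t(1) u(2) by simp
  have "e = \<alpha> (t\<cdot>S.iv t)" using A.Agrp_idem_eq[OF e(1) t(2)] .
  moreover have "x = S.cls t" using u(2) S.cls_eq[OF ut] by simp
  ultimately have "p = nu t" unfolding p nu_def by simp
  then show "p \<in> nu ` S" using S.sigma_in[OF ut] by blast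
qed

lemma nu_bij: "bij_betw nu S (cp_carrier S mS A mA \<alpha>)"
  unfolding bij_betw_def using inj_on_nu nu_in_cp_carrier cp_carrier_subset_nu_image by blast

lemma nu_hom: assumes s: "s\<in>S" and t: "t\<in>S" shows "nu (s\<cdot>t) = cp_mul S mS A mA \<alpha> lam (nu s) (nu t)"
  unfolding cp_mul_def nu_def using theta_cls_range_idems[OF s t] S.gmul_cls[OF s t] by simp

lemma nu_alpha: assumes e: "e\<in>S.E" shows "\<alpha> e = alpha' (nu e)"
  unfolding alpha'_def nu_def using e by simp

lemma nu_lam: assumes s: "s\<in>S" and a: "a\<in>A" shows "lam s a = lambda' S mS A mA \<alpha> lam (nu s) a"
  unfolding lambda'_def nu_def using theta_inv_range_idem[OF s] theta_domain_idem_mult[OF s a] by simp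

lemma nu_f: assumes s: "s\<in>S" and t: "t\<in>S" shows "f s t = f' S mS A mA \<alpha> lam f (nu s) (nu t)"
proof -
  define c where "c = \<alpha> (s\<cdot>t\<cdot>S.iv (s\<cdot>t))"
  have stS: "s\<cdot>t \<in> S" using s t by simp
  have cE: "c \<in> A.E" unfolding c_def using stS by simp
  have cc: "c \<odot> A.iv c = c" using cE by simp
  define u0 where "u0 = s\<cdot>(t\<cdot>S.iv t)"
  have u0c: "u0 \<in> S.cls s" unfolding u0_def using S.sigma_mult_idem[OF s S.mult_inv_idem[OF t]] by simp
  have u0S: "u0 \<in> S" unfolding u0_def using s t by simp
  have u0r: "u0\<cdot>S.iv u0 = s\<cdot>t\<cdot>S.iv (s\<cdot>t)" unfolding u0_def using s t
    by (simp add: S.mult_assoc S.inv_mult S.idem_left_absorb S.mult_inv_mult_left)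
  have T1: "(THE u. u \<in> S.cls s \<and> \<alpha> (u\<cdot>S.iv u) = c \<odot> A.iv c) = u0"
    using the_range_in_cls[OF u0c] cc u0r unfolding c_def by simp
  have T2: "(THE u. u \<in> S.cls (s\<cdot>t) \<and> \<alpha> (u\<cdot>S.iv u) = c \<odot> A.iv c) = s\<cdot>t"
    using the_range_in_cls[OF S.cls_self[OF stS]] cc unfolding c_def by simp
  have u0t: "S.iv u0\<cdot>(s\<cdot>t) = S.iv u0\<cdot>u0\<cdot>t"
  proof -
    have "u0\<cdot>t = s\<cdot>t" unfolding u0_def using s t by (simp add: S.mult_assoc S.mult_inv_mult')
    then show ?thesis using u0S t by (simp add: S.mult_assoc)
  qed
  have fv: "f u0 (S.iv u0\<cdot>(s\<cdot>t)) = f s t"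
    using f_domain_absorb[OF u0S t] f_range_absorb[OF s t] u0t unfolding u0_def by simp
  have fg: "f s t \<in> Agrp A mA c" using f_in_Agrp[OF s t] unfolding c_def using s t by (simp add: S.mult_assoc S.inv_mult)
  have "f' S mS A mA \<alpha> lam f (nu s) (nu t) = w_right S mS A mA \<alpha> f (S.cls s) (S.cls t) c"
    unfolding f'_def nu_def c_def using theta_cls_range_idems[OF s t] by simp
  also have "\<dots> = c \<odot> f u0 (S.iv u0\<cdot>(s\<cdot>t))"
    unfolding w_right_def Let_def S.gmul_cls[OF s t] T1 T2 ..
  also have "\<dots> = f s t" using fv A.Agrp_left_unit[OF fg] by simp
  finally show ?thesis by simp
qed

end

lemma sieben_moduleI:
  assumes "inverse_semigroup S mS" and "E_unitary S mS" and "semilattice_of_groups A mA"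
    and "sieben_twisted_module S mS A mA \<alpha> lam f"
  shows "sieben_module S mS A mA \<alpha> lam f"
  using assms unfolding sieben_module_def sieben_module_axioms_def twisted_module_on_def
    twisted_module_on_axioms_def E_unitary_semigroup_def E_unitary_semigroup_axioms_def
    group_semilattice_def group_semilattice_axioms_def inv_semigroup_def
    semilattice_of_groups_def sieben_twisted_module_def
  by blast

theorem proposition9p1:
  fixes S :: "'s set" and mS :: "'s \<Rightarrow> 's \<Rightarrow> 's"
    and A :: "'a set" and mA :: "'a \<Rightarrow> 'a \<Rightarrow> 'a"
    and \<alpha> :: "'s \<Rightarrow> 'a" and lam :: "'s \<Rightarrow> 'a \<Rightarrow> 'a" and f :: "'s \<Rightarrow> 's \<Rightarrow> 'a"
  assumes "inverse_semigroup S mS"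
    and "E_unitary S mS"
    and "semilattice_of_groups A mA"
    and "sieben_twisted_module S mS A mA \<alpha> lam f"
  shows "\<exists>\<nu>. bij_betw \<nu> S (cp_carrier S mS A mA \<alpha>) \<and>
           (\<forall>s\<in>S. \<forall>t\<in>S. \<nu> (mS s t) = cp_mul S mS A mA \<alpha> lam (\<nu> s) (\<nu> t)) \<and>
           (\<forall>e\<in>idems S mS. \<alpha> e = alpha' (\<nu> e)) \<and>
           (\<forall>s\<in>S. \<forall>a\<in>A. lam s a = lambda' S mS A mA \<alpha> lam (\<nu> s) a) \<and>
           (\<forall>s\<in>S. \<forall>t\<in>S. f s t = f' S mS A mA \<alpha> lam f (\<nu> s) (\<nu> t))"
proof -
  interpret sieben_module S mS A mA \<alpha> lam f
    using assms by (rule sieben_moduleI)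
  show ?thesis
    by (rule exI[of _ nu]) (use nu_bij nu_hom nu_alpha nu_lam nu_f in blast)
qed

end
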